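(* Let $\kappa$ be an infinite cardinal and $\mathcal{U}$ any fine ultrafilter on $\kappa$. Define $\Sigma:\mathbb{Z}^\kappa\to\mathbb{Z}^\kappa/\mathcal{U}$ by $\Sigma(\mathbf{x})=[\mathbf{f}_{\mathbf{x}}]_{\mathcal{U}}$, with $\mathbb{Z}$ embedded in the ultrapower via constant functions. Then $(\mathbb{Z}^\kappa/\mathcal{U},\Sigma)$ is a ring of Euclidean integers for $\kappa$, i.e. it satisfies (0), (RA), (LA), (CA) and (PA).
   Context: Every ordinal $\alpha$ has a unique base-2 normal form $\alpha=2^{\alpha_1}+\dots+2^{\alpha_n}$ with $\alpha_1>\dots>\alpha_n$; put $L_\alpha=\{\alpha_1,\dots,\alpha_n\}$. Formal inclusion: $\alpha\sqsubseteq\beta$ iff $L_\alpha\subseteq L_\beta$, $\alpha\sqsubset\beta$ iff $L_\alpha\subsetneq L_\beta$. $\alpha\vee\beta$ is the ordinal $\gamma$ with $L_\gamma=L_\alpha\cup L_\beta$. For $\theta<\kappa$ the cone is $C(\theta)=\{\alpha<\kappa\mid\theta\sqsubset\alpha\}$; a filter on $\kappa$ is fine if it contains all cones. For $\mathbf{x}\in\mathbb{Z}^\kappa$, $\mathbf{f}_{\mathbf{x}}(\alpha)=\sum_{\beta\sqsubseteq\alpha}x_\beta$. A ring of Euclidean integers for $\kappa$ is a discretely ordered commutative integral domain $\mathbf{Z}_\kappa$ containing $\mathbb{Z}$ as an ordered subring, together with a map $\Sigma:\mathbb{Z}^\kappa\to\mathbf{Z}_\kappa$, written $\Sigma(\mathbf{x})=\sum_\alpha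 x_\alpha$, such that: (0) if only finitely many $x_\alpha\neq0$ then $\sum_\alpha x_\alpha$ is the ordinary finite sum; (RA) every element of $\mathbf{Z}_\kappa$ is $\sum_\alpha x_\alpha$ for some $\mathbf{x}\in\mathbb{Z}^\kappa$; (LA) $u\sum_\alpha x_\alpha+v\sum_\alpha y_\alpha=\sum_\alpha(ux_\alpha+vy_\alpha)$ for all $u,v\in\mathbb{Z}$; (CA) if there is $\theta<\kappa$ with $\mathbf{f}_{\mathbf{x}}(\delta)\le\mathbf{f}_{\mathbf{y}}(\delta)$ for all $\delta<\kappa$ with $\theta\sqsubseteq\delta$, then $\sum_\alpha x_\alpha\le\sum_\alpha y_\alpha$; (PA) $(\sum_\alpha x_\alpha)(\sum_\beta y_\beta)=\sum_\gamma z_\gamma$ where $z_\gamma=\sum_{\alpha\vee\beta=\gamma}x_\alpha y_\beta$. *)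

theory Defs
  imports "HOL-Algebra.IntRing" "HOL-Library.FSet"
begin

text \<open>Ordinals below the infinite cardinal kappa are represented, via the canonical
bijection alpha |-> L_alpha (base-2 normal form exponents), by finite sets of
elements of a type 'a with |'a| = kappa.  Thus formal inclusion is |\<subseteq>|,
the join alpha \<or> beta is |\<union>|, and Z^kappa is the type 'a fset \<Rightarrow> int.\<close>

definition fine_filter :: "'a fset filter \<Rightarrow> bool" where
  "fine_filter U \<longleftrightarrow> (\<forall>\<theta>. eventually (\<lambda>\<alpha>. \<theta> |\<subset>| \<alpha>) U)"

definition is_ultrafilter :: "'i filter \<Rightarrow> bool" where
  "is_ultrafilter U \<longleftrightarrow> U \<noteq> bot \<and> (\<forall>P. eventually P U \<or> eventually (\<lambda>i. \<not> P i) U)"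

definition fsum :: "('a fset \<Rightarrow> int) \<Rightarrow> 'a fset \<Rightarrow> int" where
  "fsum x \<alpha> = (\<Sum>\<beta>\<in>{\<beta>. \<beta> |\<subseteq>| \<alpha>}. x \<beta>)"

definition conv_prod :: "('a fset \<Rightarrow> int) \<Rightarrow> ('a fset \<Rightarrow> int) \<Rightarrow> 'a fset \<Rightarrow> int" where
  "conv_prod x y \<gamma> = (\<Sum>p\<in>{(\<alpha>,\<beta>). \<alpha> |\<union>| \<beta> = \<gamma>}. x (fst p) * y (snd p))"

definition disc_ordered_domain ::
  "('r, 'm) ring_scheme \<Rightarrow> ('r \<Rightarrow> 'r \<Rightarrow> bool) \<Rightarrow> (int \<Rightarrow> 'r) \<Rightarrow> bool" where
  "disc_ordered_domain R leq e \<longleftrightarrow>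
     domain R \<and>
     (\<forall>a\<in>carrier R. leq a a) \<and>
     (\<forall>a\<in>carrier R. \<forall>b\<in>carrier R. leq a b \<and> leq b a \<longrightarrow> a = b) \<and>
     (\<forall>a\<in>carrier R. \<forall>b\<in>carrier R. \<forall>c\<in>carrier R. leq a b \<and> leq b c \<longrightarrow> leq a c) \<and>
     (\<forall>a\<in>carrier R. \<forall>b\<in>carrier R. leq a b \<or> leq b a) \<and>
     (\<forall>a\<in>carrier R. \<forall>b\<in>carrier R. \<forall>c\<in>carrier R. leq a b \<longrightarrow> leq (a \<oplus>\<^bsub>R\<^esub> c) (b \<oplus>\<^bsub>R\<^esub> c)) \<and>
     (\<forall>a\<in>carrier R. \<forall>b\<in>carrier R. leq \<zero>\<^bsub>R\<^esub> a \<and> leq \<zero>\<^bsub>R\<^esub> b \<longrightarrow> leq \<zero>\<^bsub>R\<^esub> (a \<otimes>\<^bsub>R\<^esub> b)) \<and>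
     (\<forall>a\<in>carrier R. leq \<zero>\<^bsub>R\<^esub> a \<and> a \<noteq> \<zero>\<^bsub>R\<^esub> \<longrightarrow> leq \<one>\<^bsub>R\<^esub> a) \<and>
     e \<in> ring_hom \<Z> R \<and> inj e \<and> (\<forall>m n. m \<le> n \<longleftrightarrow> leq (e m) (e n))"

definition ring_of_euclidean_integers ::
  "('r, 'm) ring_scheme \<Rightarrow> ('r \<Rightarrow> 'r \<Rightarrow> bool) \<Rightarrow> (int \<Rightarrow> 'r) \<Rightarrow> (('a fset \<Rightarrow> int) \<Rightarrow> 'r) \<Rightarrow> bool" where
  "ring_of_euclidean_integers R leq e S \<longleftrightarrow>
     disc_ordered_domain R leq e \<and>
     (\<forall>x. S x \<in> carrier R) \<and>
     \<comment> \<open>(0)\<close>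
     (\<forall>x. finite {\<alpha>. x \<alpha> \<noteq> 0} \<longrightarrow> S x = e (\<Sum>\<alpha>\<in>{\<alpha>. x \<alpha> \<noteq> 0}. x \<alpha>)) \<and>
     \<comment> \<open>(RA)\<close>
     (\<forall>r\<in>carrier R. \<exists>x. S x = r) \<and>
     \<comment> \<open>(LA)\<close>
     (\<forall>u v x y. (e u \<otimes>\<^bsub>R\<^esub> S x) \<oplus>\<^bsub>R\<^esub> (e v \<otimes>\<^bsub>R\<^esub> S y) = S (\<lambda>\<alpha>. u * x \<alpha> + v * y \<alpha>)) \<and>
     \<comment> \<open>(CA)\<close>
     (\<forall>x y. (\<exists>\<theta>. \<forall>\<delta>. \<theta> |\<subseteq>| \<delta> \<longrightarrow> fsum x \<delta> \<le> fsum y \<delta>) \<longrightarrow> leq (S x) (S y)) \<and>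
     \<comment> \<open>(PA)\<close>
     (\<forall>x y. S x \<otimes>\<^bsub>R\<^esub> S y = S (conv_prod x y))"

definition ultra_rel :: "'i filter \<Rightarrow> (('i \<Rightarrow> int) \<times> ('i \<Rightarrow> int)) set" where
  "ultra_rel U = {(f, g). eventually (\<lambda>i. f i = g i) U}"

definition uclass :: "'i filter \<Rightarrow> ('i \<Rightarrow> int) \<Rightarrow> ('i \<Rightarrow> int) set" where
  "uclass U f = ultra_rel U `` {f}"

definition urep :: "('i \<Rightarrow> int) set \<Rightarrow> 'i \<Rightarrow> int" where
  "urep A = (SOME f. f \<in> A)"

definition ultrapower :: "'i filter \<Rightarrow> ('i \<Rightarrow> int) set ring" where
  "ultrapower U = \<lparr>carrier = UNIV // ultra_rel U,
     mult = (\<lambda>A B. uclass U (\<lambda>i. urep A i * urep B i)),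
     one = uclass U (\<lambda>_. 1),
     zero = uclass U (\<lambda>_. 0),
     add = (\<lambda>A B. uclass U (\<lambda>i. urep A i + urep B i))\<rparr>"

definition ultra_le :: "'i filter \<Rightarrow> ('i \<Rightarrow> int) set \<Rightarrow> ('i \<Rightarrow> int) set \<Rightarrow> bool" where
  "ultra_le U A B \<longleftrightarrow> eventually (\<lambda>i. urep A i \<le> urep B i) U"

definition ultra_embed :: "'i filter \<Rightarrow> int \<Rightarrow> ('i \<Rightarrow> int) set" where
  "ultra_embed U n = uclass U (\<lambda>_. n)"

definition ultra_Sigma :: "'a fset filter \<Rightarrow> ('a fset \<Rightarrow> int) \<Rightarrow> ('a fset \<Rightarrow> int) set" where
  "ultra_Sigma U x = uclass U (fsum x)"

end

theory Submission imports Defs begin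

text \<open>The ultrapower of \<open>\<int>\<close> by an ultrafilter is a discretely ordered domain by the usual
Los's argument, and \<open>\<Sigma>\<close> sends \<open>x\<close> to the class of its subset-sum function \<open>f\<^sub>x\<close>. The axioms then
reduce to pointwise facts about \<open>f\<^sub>x\<close>: it is linear in \<open>x\<close>; \<open>f\<^sub>x \<cdot> f\<^sub>y = f\<^sub>z\<close> for the
union-convolution \<open>z\<close>, because the sum of \<open>x\<^sub>\<alpha> y\<^sub>\<beta>\<close> over all pairs \<open>\<alpha>, \<beta> \<subseteq> \<delta>\<close> can be grouped by
\<open>\<alpha> \<union> \<beta>\<close>; every function is some \<open>f\<^sub>x\<close> by Moebius inversion on finite sets; and fineness makes
every "above \<open>\<theta>\<close>" property hold \<open>U\<close>-almost everywhere, which gives (0) and (CA).\<close>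

lemma equiv_ultra_rel: "equiv UNIV (ultra_rel U)"
  unfolding equiv_def refl_on_def sym_def trans_def ultra_rel_def
  by (auto elim: eventually_elim2 simp: eq_commute)

lemma uclass_eq_iff: "uclass U f = uclass U g \<longleftrightarrow> eventually (\<lambda>i. f i = g i) U"
  unfolding uclass_def using eq_equiv_class_iff[OF equiv_ultra_rel, of f g]
  by (simp add: ultra_rel_def)

lemma eventually_urep_uclass: "eventually (\<lambda>i. urep (uclass U f) i = f i) U"
proof -
  have "f \<in> uclass U f"
    unfolding uclass_def using equiv_ultra_rel equiv_class_self by fastforce
  hence "urep (uclass U f) \<in> uclass U f"
    unfolding urep_def by (rule someI[of "\<lambda>x. x \<in> uclass U f"])
  thus ?thesis unfolding uclass_def ultra_rel_def by (auto elim: eventually_mono)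
qed

lemma carrier_ultrapower_iff: "A \<in> carrier (ultrapower U) \<longleftrightarrow> (\<exists>f. A = uclass U f)"
  unfolding ultrapower_def quotient_def uclass_def by auto

lemma uclass_in_carrier: "uclass U f \<in> carrier (ultrapower U)"
  using carrier_ultrapower_iff by blast

lemma ultrapower_add: "uclass U f \<oplus>\<^bsub>ultrapower U\<^esub> uclass U g = uclass U (\<lambda>i. f i + g i)"
proof -
  have "eventually (\<lambda>i. urep (uclass U f) i + urep (uclass U g) i = f i + g i) U"
    using eventually_urep_uclass[of U f] eventually_urep_uclass[of U g]
    by (auto elim: eventually_elim2)
  thus ?thesis by (simp add: ultrapower_def uclass_eq_iff)
qed

lemma ultrapower_mult: "uclass U f \<otimes>\<^bsub>ultrapower U\<^esub> uclass U g = uclass U (\<lambda>i. f i * g i)"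
proof -
  have "eventually (\<lambda>i. urep (uclass U f) i * urep (uclass U g) i = f i * g i) U"
    using eventually_urep_uclass[of U f] eventually_urep_uclass[of U g]
    by (auto elim: eventually_elim2)
  thus ?thesis by (simp add: ultrapower_def uclass_eq_iff)
qed

lemma ultrapower_zero: "\<zero>\<^bsub>ultrapower U\<^esub> = uclass U (\<lambda>_. 0)"
  by (simp add: ultrapower_def)

lemma ultrapower_one: "\<one>\<^bsub>ultrapower U\<^esub> = uclass U (\<lambda>_. 1)"
  by (simp add: ultrapower_def)

lemma ultra_le_uclass_iff:
  "ultra_le U (uclass U f) (uclass U g) \<longleftrightarrow> eventually (\<lambda>i. f i \<le> g i) U"
proof -
  note f = eventually_urep_uclass[of U f] and g = eventually_urep_uclass[of U g]
  show ?thesis unfolding ultra_le_def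
  proof
    assume "eventually (\<lambda>i. urep (uclass U f) i \<le> urep (uclass U g) i) U"
    with f g show "eventually (\<lambda>i. f i \<le> g i) U" by eventually_elim auto
  next
    assume "eventually (\<lambda>i. f i \<le> g i) U"
    with f g show "eventually (\<lambda>i. urep (uclass U f) i \<le> urep (uclass U g) i) U"
      by eventually_elim auto
  qed
qed

lemma ultrafilter_not_bot: "is_ultrafilter U \<Longrightarrow> U \<noteq> bot"
  by (simp add: is_ultrafilter_def)

lemma ultrafilter_eventually_not:
  "is_ultrafilter U \<Longrightarrow> \<not> eventually P U \<Longrightarrow> eventually (\<lambda>i. \<not> P i) U"
  by (auto simp: is_ultrafilter_def)

lemma ultrafilter_eventually_const: "is_ultrafilter U \<Longrightarrow> eventually (\<lambda>i. P) U \<longleftrightarrow> P"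
  by (cases P) (simp_all add: ultrafilter_not_bot)

lemma domain_ultrapower:
  assumes UF: "is_ultrafilter U"
  shows "domain (ultrapower U)"
proof -
  let ?R = "ultrapower U"
  have "abelian_group ?R"
  proof (rule abelian_groupI)
    fix a assume "a \<in> carrier ?R"
    then obtain f where "a = uclass U f" by (auto simp: carrier_ultrapower_iff)
    thus "\<exists>b\<in>carrier ?R. b \<oplus>\<^bsub>?R\<^esub> a = \<zero>\<^bsub>?R\<^esub>"
      by (intro bexI[of _ "uclass U (\<lambda>i. - f i)"])
        (auto simp: uclass_in_carrier ultrapower_add ultrapower_zero)
  next
    show "\<zero>\<^bsub>?R\<^esub> \<in> carrier ?R" by (simp add: ultrapower_zero uclass_in_carrier)
  qed (auto simp: carrier_ultrapower_iff uclass_in_carrier ultrapower_add ultrapower_zero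
      uclass_eq_iff algebra_simps)
  moreover have "comm_monoid ?R"
  proof (rule comm_monoidI)
    show "\<one>\<^bsub>?R\<^esub> \<in> carrier ?R" by (simp add: ultrapower_one uclass_in_carrier)
  qed (auto simp: carrier_ultrapower_iff ultrapower_mult ultrapower_one uclass_eq_iff
      algebra_simps)
  ultimately have "cring ?R"
    by (rule cringI)
      (auto simp: carrier_ultrapower_iff ultrapower_mult ultrapower_add uclass_eq_iff
        algebra_simps)
  moreover have "\<one>\<^bsub>?R\<^esub> \<noteq> \<zero>\<^bsub>?R\<^esub>"
    using ultrafilter_not_bot[OF UF] by (simp add: ultrapower_one ultrapower_zero uclass_eq_iff)
  moreover have "a = \<zero>\<^bsub>?R\<^esub> \<or> b = \<zero>\<^bsub>?R\<^esub>"
    if ab: "a \<otimes>\<^bsub>?R\<^esub> b = \<zero>\<^bsub>?R\<^esub>" "a \<in> carrier ?R" "b \<in> carrier ?R" for a b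
  proof -
    obtain f g where fg: "a = uclass U f" "b = uclass U g"
      using ab by (auto simp: carrier_ultrapower_iff)
    with ab have fg_zero: "eventually (\<lambda>i. f i = 0 \<or> g i = 0) U"
      by (simp add: ultrapower_mult ultrapower_zero uclass_eq_iff)
    show ?thesis
    proof (cases "eventually (\<lambda>i. f i = 0) U")
      case False
      from ultrafilter_eventually_not[OF UF False] fg_zero have "eventually (\<lambda>i. g i = 0) U"
        by eventually_elim auto
      thus ?thesis by (simp add: fg ultrapower_zero uclass_eq_iff)
    qed (simp add: fg ultrapower_zero uclass_eq_iff)
  qed
  ultimately show ?thesis
    by (intro domain.intro domain_axioms.intro) auto
qed

lemma disc_ordered_domain_ultrapower:
  assumes UF: "is_ultrafilter U"
  shows "disc_ordered_domain (ultrapower U) (ultra_le U) (ultra_embed U)"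
  unfolding disc_ordered_domain_def
proof (intro conjI ballI allI impI; (elim conjE)?)
  let ?R = "ultrapower U"
  fix a b c assume "a \<in> carrier ?R" "b \<in> carrier ?R" "c \<in> carrier ?R"
  then obtain f g h where fgh: "a = uclass U f" "b = uclass U g" "c = uclass U h"
    by (auto simp: carrier_ultrapower_iff)
  show "ultra_le U a a" by (simp add: fgh ultra_le_uclass_iff)
  show "a = b" if "ultra_le U a b" "ultra_le U b a"
    using that by (auto simp: fgh ultra_le_uclass_iff uclass_eq_iff elim: eventually_elim2)
  show "ultra_le U a c" if "ultra_le U a b" "ultra_le U b c"
    using that by (auto simp: fgh ultra_le_uclass_iff elim: eventually_elim2)
  show "ultra_le U a b \<or> ultra_le U b a"
  proof (cases "eventually (\<lambda>i. f i \<le> g i) U")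
    case False
    hence "eventually (\<lambda>i. g i \<le> f i) U"
      using ultrafilter_eventually_not[OF UF False] by (auto elim: eventually_mono)
    thus ?thesis by (simp add: fgh ultra_le_uclass_iff)
  qed (simp add: fgh ultra_le_uclass_iff)
  show "ultra_le U (a \<oplus>\<^bsub>?R\<^esub> c) (b \<oplus>\<^bsub>?R\<^esub> c)" if "ultra_le U a b"
    using that by (auto simp: fgh ultra_le_uclass_iff ultrapower_add elim: eventually_mono)
  show "ultra_le U \<zero>\<^bsub>?R\<^esub> (a \<otimes>\<^bsub>?R\<^esub> b)"
    if "ultra_le U \<zero>\<^bsub>?R\<^esub> a" "ultra_le U \<zero>\<^bsub>?R\<^esub> b"
    using that by (auto simp: fgh ultra_le_uclass_iff ultrapower_mult ultrapower_zero
        elim: eventually_elim2)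
  show "ultra_le U \<one>\<^bsub>?R\<^esub> a" if "ultra_le U \<zero>\<^bsub>?R\<^esub> a" "a \<noteq> \<zero>\<^bsub>?R\<^esub>"
    using that ultrafilter_eventually_not[OF UF, of "\<lambda>i. f i = 0"]
    by (auto simp: fgh ultra_le_uclass_iff uclass_eq_iff ultrapower_zero ultrapower_one
        elim: eventually_elim2)
next
  show "ultra_embed U \<in> ring_hom \<Z> (ultrapower U)"
    by (rule ring_hom_memI)
      (auto simp: ultra_embed_def uclass_in_carrier ultrapower_mult ultrapower_add ultrapower_one)
  show "inj (ultra_embed U)"
    by (rule injI) (simp add: ultra_embed_def uclass_eq_iff ultrafilter_eventually_const[OF UF])
  show "m \<le> n \<longleftrightarrow> ultra_le U (ultra_embed U m) (ultra_embed U n)" for m n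
    by (simp add: ultra_embed_def ultra_le_uclass_iff ultrafilter_eventually_const[OF UF])
qed (rule domain_ultrapower[OF UF])

lemma finite_fsubsets: "finite {\<beta>. \<beta> |\<subseteq>| \<alpha>}"
proof -
  have "{\<beta>. \<beta> |\<subseteq>| \<alpha>} = fset (fPow \<alpha>)" by auto
  thus ?thesis by simp
qed

function moebius :: "('a fset \<Rightarrow> int) \<Rightarrow> 'a fset \<Rightarrow> int" where
  "moebius f \<alpha> = f \<alpha> - (\<Sum>\<beta>\<in>{\<beta>. \<beta> |\<subset>| \<alpha>}. moebius f \<beta>)"
  by auto
termination by (relation "measure (\<lambda>(f, \<alpha>). fcard \<alpha>)") (auto simp: pfsubset_fcard_mono)

declare moebius.simps[simp del]

lemma fsum_moebius: "fsum (moebius f) = f"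
proof
  fix \<alpha> :: "'a fset"
  have "{\<beta>. \<beta> |\<subseteq>| \<alpha>} = insert \<alpha> {\<beta>. \<beta> |\<subset>| \<alpha>}" by auto
  moreover have "finite {\<beta>. \<beta> |\<subset>| \<alpha>}"
    by (rule finite_subset[OF _ finite_fsubsets[of \<alpha>]]) auto
  ultimately show "fsum (moebius f) \<alpha> = f \<alpha>"
    by (simp add: fsum_def moebius.simps[of f \<alpha>])
qed

lemma fsum_linear: "fsum (\<lambda>\<alpha>. u * x \<alpha> + v * y \<alpha>) \<delta> = u * fsum x \<delta> + v * fsum y \<delta>"
  by (simp add: fsum_def sum.distrib sum_distrib_left)

lemma fsum_conv_prod: "fsum (conv_prod x y) \<delta> = fsum x \<delta> * fsum y \<delta>"
proof -
  let ?S = "{\<alpha>. \<alpha> |\<subseteq>| \<delta>} \<times> {\<beta>. \<beta> |\<subseteq>| \<delta>}"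
  let ?h = "\<lambda>p. x (fst p) * y (snd p)"
  have pairs: "{p \<in> ?S. (\<lambda>(\<alpha>, \<beta>). \<alpha> |\<union>| \<beta>) p = \<gamma>} = {(\<alpha>, \<beta>). \<alpha> |\<union>| \<beta> = \<gamma>}"
    if "\<gamma> |\<subseteq>| \<delta>" for \<gamma>
    using that by auto
  have "fsum (conv_prod x y) \<delta>
      = (\<Sum>\<gamma>\<in>{\<gamma>. \<gamma> |\<subseteq>| \<delta>}. sum ?h {p \<in> ?S. (\<lambda>(\<alpha>, \<beta>). \<alpha> |\<union>| \<beta>) p = \<gamma>})"
    unfolding fsum_def conv_prod_def by (rule sum.cong) (simp_all add: pairs)
  also have "\<dots> = sum ?h ?S"
    using finite_fsubsets by (intro sum.group) auto
  also have "\<dots> = fsum x \<delta> * fsum y \<delta>"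
    by (simp add: fsum_def sum.cartesian_product split_def sum_product)
  finally show ?thesis .
qed

lemma fsum_finite_support:
  assumes "finite {\<alpha>. x \<alpha> \<noteq> 0}" and "\<forall>\<beta>\<in>{\<alpha>. x \<alpha> \<noteq> 0}. \<beta> |\<subseteq>| \<delta>"
  shows "fsum x \<delta> = (\<Sum>\<alpha>\<in>{\<alpha>. x \<alpha> \<noteq> 0}. x \<alpha>)"
  unfolding fsum_def by (rule sum.mono_neutral_right[OF finite_fsubsets]) (use assms in auto)

lemma finite_set_of_fsets_bounded: "finite S \<Longrightarrow> \<exists>\<theta>. \<forall>\<beta>\<in>S. \<beta> |\<subseteq>| (\<theta> :: 'a fset)"
proof (induction S rule: finite_induct)
  case (insert \<alpha> S)
  then obtain \<theta> where "\<forall>\<beta>\<in>S. \<beta> |\<subseteq>| \<theta>" by auto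
  hence "\<forall>\<beta>\<in>insert \<alpha> S. \<beta> |\<subseteq>| \<theta> |\<union>| \<alpha>" by auto
  thus ?case by blast
qed simp

lemma fine_filter_eventually_above:
  assumes "fine_filter U" shows "eventually (\<lambda>\<delta>. \<theta> |\<subseteq>| \<delta>) U"
  using assms[unfolded fine_filter_def, rule_format, of \<theta>] by (rule eventually_mono) auto

lemma ultra_Sigma_finite_support:
  assumes "fine_filter U" and fin: "finite {\<alpha>. x \<alpha> \<noteq> 0}"
  shows "ultra_Sigma U x = ultra_embed U (\<Sum>\<alpha>\<in>{\<alpha>. x \<alpha> \<noteq> 0}. x \<alpha>)"
proof -
  obtain \<theta> where "\<forall>\<beta>\<in>{\<alpha>. x \<alpha> \<noteq> 0}. \<beta> |\<subseteq>| \<theta>"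
    using finite_set_of_fsets_bounded[OF fin] by blast
  hence "eventually (\<lambda>\<delta>. fsum x \<delta> = (\<Sum>\<alpha>\<in>{\<alpha>. x \<alpha> \<noteq> 0}. x \<alpha>)) U"
    using fine_filter_eventually_above[OF assms(1), of \<theta>]
    by (auto intro: fsum_finite_support[OF fin] elim!: eventually_mono)
  thus ?thesis by (simp add: ultra_Sigma_def ultra_embed_def uclass_eq_iff)
qed

lemma ultra_Sigma_in_carrier: "ultra_Sigma U x \<in> carrier (ultrapower U)"
  by (simp add: ultra_Sigma_def uclass_in_carrier)

lemma ultra_Sigma_surj: "r \<in> carrier (ultrapower U) \<Longrightarrow> \<exists>x. ultra_Sigma U x = r"
  by (metis carrier_ultrapower_iff fsum_moebius ultra_Sigma_def)

lemma ultra_Sigma_linear: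
  "ultra_embed U u \<otimes>\<^bsub>ultrapower U\<^esub> ultra_Sigma U x \<oplus>\<^bsub>ultrapower U\<^esub>
     ultra_embed U v \<otimes>\<^bsub>ultrapower U\<^esub> ultra_Sigma U y
   = ultra_Sigma U (\<lambda>\<alpha>. u * x \<alpha> + v * y \<alpha>)"
  by (simp add: ultra_embed_def ultra_Sigma_def ultrapower_mult ultrapower_add uclass_eq_iff
      fsum_linear)

lemma ultra_Sigma_mono:
  assumes "fine_filter U" and "\<forall>\<delta>. \<theta> |\<subseteq>| \<delta> \<longrightarrow> fsum x \<delta> \<le> fsum y \<delta>"
  shows "ultra_le U (ultra_Sigma U x) (ultra_Sigma U y)"
  using fine_filter_eventually_above[OF assms(1), of \<theta>] assms(2)
  by (auto simp: ultra_Sigma_def ultra_le_uclass_iff elim: eventually_mono)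

lemma ultra_Sigma_mult:
  "ultra_Sigma U x \<otimes>\<^bsub>ultrapower U\<^esub> ultra_Sigma U y = ultra_Sigma U (conv_prod x y)"
  by (simp add: ultra_Sigma_def ultrapower_mult uclass_eq_iff fsum_conv_prod)

theorem mainTheorem3:
  fixes U :: "'a fset filter"
  assumes "infinite (UNIV :: 'a set)"
    and "is_ultrafilter U"
    and "fine_filter U"
  shows "ring_of_euclidean_integers (ultrapower U) (ultra_le U) (ultra_embed U) (ultra_Sigma U)"
  unfolding ring_of_euclidean_integers_def
proof (intro conjI allI impI ballI)
  show "disc_ordered_domain (ultrapower U) (ultra_le U) (ultra_embed U)"
    using disc_ordered_domain_ultrapower[OF assms(2)] .
  show "ultra_le U (ultra_Sigma U x) (ultra_Sigma U y)"
    if "\<exists>\<theta>. \<forall>\<delta>. \<theta> |\<subseteq>| \<delta> \<longrightarrow> fsum x \<delta> \<le> fsum y \<delta>" for x y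
    using that ultra_Sigma_mono[OF assms(3)] by blast
qed (simp_all add: ultra_Sigma_in_carrier ultra_Sigma_finite_support[OF assms(3)]
  ultra_Sigma_surj ultra_Sigma_linear ultra_Sigma_mult)

end
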